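(* Let $m,k$ be natural numbers. If the hereditary representation in base $k+1$ of the $k$-th term $G(k,m)$ of the Goodstein sequence $G(m)$ contains more than one non-zero term, then $G(k+1,m)\ge G(k,m)$.
   Context: For a natural number base $b>1$, the hereditary representation $m\langle b\rangle$ of $m$ is $\sum_{i=0}^{l} a_i b^{i}$ with $0\le a_i<b$, $a_l\ne0$, each exponent itself written in hereditary representation in base $b$, recursively; its terms are the summands $a_i b^i$, and it contains more than one non-zero term if $a_i\neq0$ for at least two indices $i$. $m\langle b\rangle''$ is obtained by syntactically replacing every $b$ by $b+1$ in $m\langle b\rangle$. The Goodstein sequence $G(m)=\{m, m''-1, (m''-1)''-1,\dots\}$ starts from $m$ in base $2$; its $n$-th term is $G(n,m)$, with $G(1,m)=m$ in base $2$, $G(k,m)$ written in base $k+1$, and $G(k+1,m)=G(k,m)\langle k+1\rangle''-1$. *)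

theory Defs
  imports Main
begin

definition digit :: "nat \<Rightarrow> nat \<Rightarrow> nat \<Rightarrow> nat" where
  "digit b n i = (n div b ^ i) mod b"

text \<open>The hereditary base-b representation of n is the sum over i of a_i b^i with the
  exponents i again written hereditarily (all nonzero digits have index i < n).
  bump b n is the value of the expression obtained by replacing every b by b+1,
  i.e. the value of m<b>''.\<close>
function bump :: "nat \<Rightarrow> nat \<Rightarrow> nat" where
  "bump b n = (if b < 2 \<or> n = 0 then n
               else (\<Sum>i<n. digit b n i * (b + 1) ^ bump b i))"
  by pat_completeness auto
termination
  by (relation "measure (\<lambda>(b, n). n)") auto

definition several_terms :: "nat \<Rightarrow> nat \<Rightarrow> bool" where
  "several_terms b n \<longleftrightarrow> (\<exists>i j. i \<noteq> j \<and> digit b n i \<noteq> 0 \<and> digit b n j \<noteq> 0)"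

text \<open>Goodstein sequence, indexed from 1: G 1 m = m, and G k m is written in base k+1.\<close>
fun goodstein :: "nat \<Rightarrow> nat \<Rightarrow> nat" where
  "goodstein 0 m = m"
| "goodstein (Suc 0) m = m"
| "goodstein (Suc (Suc k)) m = bump (Suc (Suc k)) (goodstein (Suc k) m) - 1"

end

theory Submission
  imports Defs
begin

(* Replacing the base b by b+1 can only enlarge each term d*b^i of the expansion, since the
   exponent i also only grows (by induction). A term with exponent i > 0 grows strictly, and
   with several non-zero terms one of them has such an exponent; so n < n<b>'', and subtracting
   one gives G(k+1,m) = G(k,m)<k+1>'' - 1 \<ge> G(k,m). *)

declare bump.simps[simp del]

lemma digit_expansion_mod: "n mod b ^ N = (\<Sum>i<N. digit b n i * b ^ i)"
proof (induction N)
  case 0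
  then show ?case by simp
next
  case (Suc N)
  have "n mod b ^ Suc N = b ^ N * (n div b ^ N mod b) + n mod b ^ N"
    using mod_mult2_eq[of n "b ^ N" b] by (simp add: mult.commute)
  then show ?case using Suc by (simp add: digit_def)
qed

lemma less_power_base: "(2::nat) \<le> b \<Longrightarrow> n < b ^ n"
  using less_exp[of n] power_mono[of 2 b n] by linarith

lemma digit_expansion:
  assumes "2 \<le> b"
  shows "n = (\<Sum>i<n. digit b n i * b ^ i)"
  using digit_expansion_mod[of n b n] less_power_base[OF assms] by simp

lemma digit_nonzero_imp_less:
  assumes "2 \<le> b" and "digit b n i \<noteq> 0"
  shows "i < n"
proof -
  have "n div b ^ i \<noteq> 0"
    using assms(2) by (auto simp: digit_def intro: ccontr)
  then have "b ^ i \<le> n"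
    by (simp add: div_eq_0_iff)
  then show ?thesis
    using less_power_base[OF assms(1), of i] by linarith
qed

lemma bump_eq_sum:
  assumes "2 \<le> b" and "n \<noteq> 0"
  shows "bump b n = (\<Sum>i<n. digit b n i * (b + 1) ^ bump b i)"
  using assms by (simp add: bump.simps)

lemma power_le_Suc_power: "i \<le> j \<Longrightarrow> (b::nat) ^ i \<le> (b + 1) ^ j"
  using power_mono[of b "b + 1" i] power_increasing[of i j "b + 1"] by simp

lemma power_less_Suc_power: "0 < i \<Longrightarrow> i \<le> j \<Longrightarrow> (b::nat) ^ i < (b + 1) ^ j"
  using power_strict_mono[of b "b + 1" i] power_increasing[of i j "b + 1"] by simp

lemma le_bump:
  assumes "2 \<le> b"
  shows "n \<le> bump b n"
proof (induction n rule: less_induct)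
  case (less n)
  show ?case
  proof (cases "n = 0")
    case True
    then show ?thesis by simp
  next
    case False
    have "n = (\<Sum>i<n. digit b n i * b ^ i)"
      using digit_expansion[OF assms] .
    also have "\<dots> \<le> (\<Sum>i<n. digit b n i * (b + 1) ^ bump b i)"
      using less.IH by (intro sum_mono mult_le_mono2 power_le_Suc_power) simp
    also have "\<dots> = bump b n"
      using bump_eq_sum[OF assms False] by simp
    finally show ?thesis .
  qed
qed

lemma less_bump:
  assumes "2 \<le> b" and "0 < a" and "digit b n a \<noteq> 0"
  shows "n < bump b n"
proof -
  have "a < n"
    using digit_nonzero_imp_less[OF assms(1,3)] .
  have "n = (\<Sum>i<n. digit b n i * b ^ i)"
    using digit_expansion[OF assms(1)] .
  also have "\<dots> < (\<Sum>i<n. digit b n i * (b + 1) ^ bump b i)"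
  proof (rule sum_strict_mono_ex1)
    show "\<forall>i\<in>{..<n}. digit b n i * b ^ i \<le> digit b n i * (b + 1) ^ bump b i"
      using le_bump[OF assms(1)] by (intro ballI mult_le_mono2 power_le_Suc_power)
    have "b ^ a < (b + 1) ^ bump b a"
      using power_less_Suc_power[OF assms(2) le_bump[OF assms(1)]] .
    then show "\<exists>i\<in>{..<n}. digit b n i * b ^ i < digit b n i * (b + 1) ^ bump b i"
      using \<open>a < n\<close> assms(3) by auto
  qed simp
  also have "\<dots> = bump b n"
    using bump_eq_sum[OF assms(1)] \<open>a < n\<close> by simp
  finally show ?thesis .
qed

lemma several_terms_imp_positive_digit:
  assumes "several_terms b n"
  obtains a where "0 < a" and "digit b n a \<noteq> 0"
  using assms unfolding several_terms_def by (metis neq0_conv)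

lemma goodstein_Suc:
  "1 \<le> k \<Longrightarrow> goodstein (k + 1) m = bump (k + 1) (goodstein k m) - 1"
  by (cases k) auto

theorem lemma2:
  fixes m k :: nat
  assumes "k \<ge> 1"
    and "several_terms (k + 1) (goodstein k m)"
  shows "goodstein (k + 1) m \<ge> goodstein k m"
proof -
  obtain a where "0 < a" and "digit (k + 1) (goodstein k m) a \<noteq> 0"
    using several_terms_imp_positive_digit[OF assms(2)] .
  then have "goodstein k m < bump (k + 1) (goodstein k m)"
    using less_bump[of "k + 1"] assms(1) by simp
  then show ?thesis
    using goodstein_Suc[OF assms(1)] by simp
qed

end
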